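(* Let $\mathfrak{g}$ be a $d$-dimensional real Lie algebra and let $\star$ be a star-product on $\mathfrak{g}^{*}$ (in the sense described in the context) satisfying property (P1). For $n\in\mathbb{N}$ let $\mathcal{B}_n=\{p_1,p_2,\ldots,p_{n_d}\}$ be a basis of $\sum_{j=0}^{n}S^j(\mathfrak{g})$ (the polynomials on $\mathfrak{g}^*$ of degree $\le n$) consisting of monomials in $X^1,\ldots,X^d$, ordered by decreasing degree, where $n_d=\dim\sum_{j=0}^n S^j(\mathfrak{g})$. For a monomial $p=X^{i_1}X^{i_2}\cdots X^{i_m}$ put $p^{\star}=X^{i_1}\star X^{i_2}\star\cdots\star X^{i_m}$. Then $\mathcal{B}^{*}_n=\{p_1^{\star},\ldots,p_{n_d}^{\star}\}$ is a spanning set for $\big(\sum_{j=0}^n S^j(\mathfrak{g})\big)[[\epsilon]]$ over $\mathbb{R}[[\epsilon]]$.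
   Context: $\mathfrak{g}$ has basis $X^1,\ldots,X^d$ with structure constants $[X^i,X^j]=c_k^{ij}X^k$ (summation convention); the $X^i$ are simultaneously regarded as linear coordinate functions on $\mathfrak{g}^*\cong\mathbb{R}^d$, so $S(\mathfrak{g})$ is the algebra of polynomial functions on $\mathfrak{g}^*$. The linear Poisson bracket is $\{a,b\}=c_k^{ij}X^k\,\partial_i a\,\partial_j b$. A star-product (deformation quantization) on $\mathfrak{g}^*$ is an $\mathbb{R}[[\epsilon]]$-bilinear product on $C^\infty(\mathfrak{g}^* )[[\epsilon]]$ given by $a\star b=\sum_{j\ge0}\epsilon^j\Pi_j(a,b)$ with $\Pi_j$ bi-differential operators, which is associative, has $\Pi_0(a,b)=ab$, and $\Pi_1(a,b)-\Pi_1(b,a)=\{a,b\}$; polynomials and operators may have coefficients in $\mathbb{R}[[\epsilon]]$. Property (P1): for any polynomials $p_n,q_m$ on $\mathfrak{g}^*$ of degrees $n$ and $m$, $p_n\star q_m=p_nq_m+r_{m+n-1}$ where $r_{m+n-1}$ is a polynomial of degree at most $m+n-1$. *)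

theory Defs
  imports "HOL-Analysis.Analysis" "HOL-Library.Multiset"
          "HOL-Computational_Algebra.Formal_Power_Series"
begin

text \<open>The dual space g* of a d-dimensional real Lie algebra is modelled as real^'d,
  with 'd a finite index type (d = CARD('d)). The basis vector X^i is the linear
  coordinate function x \<mapsto> x $ i.\<close>

definition coord :: "'d::finite \<Rightarrow> real^'d \<Rightarrow> real" where
  "coord i = (\<lambda>x. x $ i)"

definition partial :: "'d::finite \<Rightarrow> (real^'d \<Rightarrow> real) \<Rightarrow> real^'d \<Rightarrow> real" where
  "partial i f = (\<lambda>x. deriv (\<lambda>t. f (x + t *\<^sub>R axis i 1)) 0)"

fun dw :: "'d::finite list \<Rightarrow> (real^'d \<Rightarrow> real) \<Rightarrow> real^'d \<Rightarrow> real" where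
  "dw [] f = f"
| "dw (i # u) f = partial i (dw u f)"

definition smooth :: "(real^'d::finite \<Rightarrow> real) \<Rightarrow> bool" where
  "smooth f \<longleftrightarrow> (\<forall>u. continuous_on UNIV (dw u f) \<and>
      (\<forall>i x. (\<lambda>t. dw u f (x + t *\<^sub>R axis i 1)) differentiable (at 0)))"

text \<open>Elements of C^\<infinity>(g*)[[\<epsilon>]]: sequences of coefficient functions.\<close>
definition fseries :: "(nat \<Rightarrow> real^'d::finite \<Rightarrow> real) \<Rightarrow> bool" where
  "fseries a \<longleftrightarrow> (\<forall>k. smooth (a k))"

definition bidiff_op :: "((real^'d::finite \<Rightarrow> real) \<Rightarrow> (real^'d \<Rightarrow> real) \<Rightarrow> real^'d \<Rightarrow> real) \<Rightarrow> bool" where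
  "bidiff_op P \<longleftrightarrow> (\<exists>F c. finite F \<and> (\<forall>p\<in>F. smooth (c p)) \<and>
     (\<forall>f g. smooth f \<longrightarrow> smooth g \<longrightarrow>
        P f g = (\<lambda>x. \<Sum>p\<in>F. c p x * dw (fst p) f x * dw (snd p) g x)))"

text \<open>The product a \<star> b = \<Sum>_j \<epsilon>^j \<Pis>_j(a,b), extended R[[\<epsilon>]]-bilinearly.\<close>
definition star_of :: "(nat \<Rightarrow> (real^'d::finite \<Rightarrow> real) \<Rightarrow> (real^'d \<Rightarrow> real) \<Rightarrow> real^'d \<Rightarrow> real)
     \<Rightarrow> (nat \<Rightarrow> real^'d \<Rightarrow> real) \<Rightarrow> (nat \<Rightarrow> real^'d \<Rightarrow> real) \<Rightarrow> nat \<Rightarrow> real^'d \<Rightarrow> real" where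
  "star_of Pis a b = (\<lambda>k x. \<Sum>i\<le>k. \<Sum>j\<le>k - i. Pis i (a j) (b (k - i - j)) x)"

text \<open>Structure constants: c k i j = c_k^{ij}, i.e. [X^i,X^j] = \<Sum>_k c k i j X^k.\<close>
definition lie_structure :: "('d::finite \<Rightarrow> 'd \<Rightarrow> 'd \<Rightarrow> real) \<Rightarrow> bool" where
  "lie_structure c \<longleftrightarrow> (\<forall>k i j. c k i j = - c k j i) \<and>
     (\<forall>i j l m. (\<Sum>k\<in>UNIV. c k i j * c m k l + c k j l * c m k i + c k l i * c m k j) = 0)"

definition poisson :: "('d::finite \<Rightarrow> 'd \<Rightarrow> 'd \<Rightarrow> real) \<Rightarrow> (real^'d \<Rightarrow> real) \<Rightarrow> (real^'d \<Rightarrow> real) \<Rightarrow> real^'d \<Rightarrow> real" where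
  "poisson c a b = (\<lambda>x. \<Sum>i\<in>UNIV. \<Sum>j\<in>UNIV. \<Sum>k\<in>UNIV. c k i j * x $ k * dw [i] a x * dw [j] b x)"

definition is_star_product :: "('d::finite \<Rightarrow> 'd \<Rightarrow> 'd \<Rightarrow> real) \<Rightarrow>
     (nat \<Rightarrow> (real^'d \<Rightarrow> real) \<Rightarrow> (real^'d \<Rightarrow> real) \<Rightarrow> real^'d \<Rightarrow> real) \<Rightarrow> bool" where
  "is_star_product c Pis \<longleftrightarrow>
     (\<forall>j. bidiff_op (Pis j)) \<and>
     (\<forall>a b e. fseries a \<longrightarrow> fseries b \<longrightarrow> fseries e \<longrightarrow>
        star_of Pis (star_of Pis a b) e = star_of Pis a (star_of Pis b e)) \<and>
     (\<forall>f g. smooth f \<longrightarrow> smooth g \<longrightarrow> Pis 0 f g = (\<lambda>x. f x * g x)) \<and>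
     (\<forall>f g. smooth f \<longrightarrow> smooth g \<longrightarrow> (\<lambda>x. Pis 1 f g x - Pis 1 g f x) = poisson c f g)"

text \<open>Monomials are multisets of coordinate indices.\<close>
definition mono :: "'d::finite multiset \<Rightarrow> real^'d \<Rightarrow> real" where
  "mono M = (\<lambda>x. \<Prod>i\<in>UNIV. (x $ i) ^ count M i)"

text \<open>Real polynomial functions of degree at most N (N < 0 means the zero function).\<close>
definition poly_le :: "int \<Rightarrow> (real^'d::finite \<Rightarrow> real) \<Rightarrow> bool" where
  "poly_le N f \<longleftrightarrow> (\<exists>a. f = (\<lambda>x. \<Sum>M\<in>{M. int (size M) \<le> N}. a M * mono M x))"

definition poly_deg :: "nat \<Rightarrow> (real^'d::finite \<Rightarrow> real) \<Rightarrow> bool" where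
  "poly_deg n f \<longleftrightarrow> poly_le (int n) f \<and> (\<forall>k<n. \<not> poly_le (int k) f)"

text \<open>Elements of (\<Sum>_{j\<le>N} S^j(g))[[\<epsilon>]].\<close>
definition polyser :: "int \<Rightarrow> (nat \<Rightarrow> real^'d::finite \<Rightarrow> real) \<Rightarrow> bool" where
  "polyser N s \<longleftrightarrow> (\<forall>k. poly_le N (s k))"

definition const_ser :: "(real^'d::finite \<Rightarrow> real) \<Rightarrow> nat \<Rightarrow> real^'d \<Rightarrow> real" where
  "const_ser f = (\<lambda>k. if k = 0 then f else (\<lambda>_. 0))"

definition scal :: "real fps \<Rightarrow> (nat \<Rightarrow> real^'d::finite \<Rightarrow> real) \<Rightarrow> nat \<Rightarrow> real^'d \<Rightarrow> real" where
  "scal r a = (\<lambda>k x. \<Sum>i\<le>k. fps_nth r i * a (k - i) x)"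

definition P1 :: "(nat \<Rightarrow> (real^'d::finite \<Rightarrow> real) \<Rightarrow> (real^'d \<Rightarrow> real) \<Rightarrow> real^'d \<Rightarrow> real) \<Rightarrow> bool" where
  "P1 Pis \<longleftrightarrow> (\<forall>n m p q. poly_deg n p \<longrightarrow> poly_deg m q \<longrightarrow>
     (\<exists>r. (\<forall>k x. star_of Pis (const_ser p) (const_ser q) k x = const_ser (\<lambda>x. p x * q x) k x + r k x)
          \<and> polyser (int n + int m - 1) r))"

text \<open>p^\<star> for the monomial X^{i_1}\<cdots>X^{i_m} written as the word [i_1,...,i_m].\<close>
fun starw :: "(nat \<Rightarrow> (real^'d::finite \<Rightarrow> real) \<Rightarrow> (real^'d \<Rightarrow> real) \<Rightarrow> real^'d \<Rightarrow> real)
     \<Rightarrow> 'd list \<Rightarrow> nat \<Rightarrow> real^'d \<Rightarrow> real" where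
  "starw Pis [] = const_ser (\<lambda>_. 1)"
| "starw Pis [i] = const_ser (coord i)"
| "starw Pis (i # j # w) = star_of Pis (const_ser (coord i)) (starw Pis (j # w))"

end

theory Submission
  imports Defs
begin

(* Since \<Pi>\<^sub>0 is the pointwise product and, by (P1), every \<Pi>\<^sub>k with k \<ge> 1 lowers the total
   degree of two polynomials by at least one, X^{i_1} \<star> ... \<star> X^{i_m} equals the monomial
   X^{i_1}...X^{i_m} plus a series of polynomials of degree < m. The family p^\<star> is therefore
   unitriangular with respect to the monomial basis, and a series of polynomials of degree \<le> n
   is expanded by removing its top-degree part coefficientwise and recursing on the degree. *)

lemma finite_multisets_size_le: "finite {M::'d::finite multiset. int (size M) \<le> N}"
proof -
  have "{M::'d multiset. int (size M) \<le> N} \<subseteq> (\<Union>n\<in>{..nat N}. multisets_of_size UNIV n)"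
    by (auto simp: multisets_of_size_def)
  moreover have "finite (\<Union>n\<in>{..nat N}. multisets_of_size (UNIV::'d set) n)" by auto
  ultimately show ?thesis by (rule finite_subset)
qed

lemma finite_multisets_size_eq: "finite {M::'d::finite multiset. int (size M) = N}"
  by (rule finite_subset[OF _ finite_multisets_size_le[of N]]) auto

lemma sum_multisets_size_le_plus1:
  "(\<Sum>M\<in>{M::'d::finite multiset. int (size M) \<le> N + 1}. f M) =
     (\<Sum>M\<in>{M. int (size M) \<le> N}. f M) + (\<Sum>M\<in>{M. int (size M) = N + 1}. f M)"
proof -
  have "{M::'d multiset. int (size M) \<le> N + 1} = {M. int (size M) \<le> N} \<union> {M. int (size M) = N + 1}"
    by auto
  moreover have "{M::'d multiset. int (size M) \<le> N} \<inter> {M. int (size M) = N + 1} = {}"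
    by auto
  ultimately show ?thesis
    by (simp add: sum.union_disjoint finite_multisets_size_le finite_multisets_size_eq)
qed

lemma poly_le_zero: "poly_le N (\<lambda>_. 0)"
  unfolding poly_le_def by (rule exI[of _ "\<lambda>_. 0"]) simp

lemma poly_le_add:
  assumes "poly_le N f" and "poly_le N g"
  shows "poly_le N (\<lambda>x. f x + g x)"
proof -
  obtain a b where "f = (\<lambda>x. \<Sum>M\<in>{M. int (size M) \<le> N}. a M * mono M x)"
    and "g = (\<lambda>x. \<Sum>M\<in>{M. int (size M) \<le> N}. b M * mono M x)"
    using assms unfolding poly_le_def by blast
  then show ?thesis
    unfolding poly_le_def by (intro exI[of _ "\<lambda>M. a M + b M"]) (simp add: algebra_simps sum.distrib)
qed

lemma poly_le_cmult:
  assumes "poly_le N f"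
  shows "poly_le N (\<lambda>x. c * f x)"
proof -
  obtain a where "f = (\<lambda>x. \<Sum>M\<in>{M. int (size M) \<le> N}. a M * mono M x)"
    using assms unfolding poly_le_def by blast
  then show ?thesis
    unfolding poly_le_def by (intro exI[of _ "\<lambda>M. c * a M"]) (simp add: algebra_simps sum_distrib_left)
qed

lemma poly_le_diff: "poly_le N f \<Longrightarrow> poly_le N g \<Longrightarrow> poly_le N (\<lambda>x. f x - g x)"
  using poly_le_add[of N f "\<lambda>x. (-1) * g x"] poly_le_cmult[of N g "-1"] by simp

lemma poly_le_sum:
  "finite F \<Longrightarrow> (\<And>j. j \<in> F \<Longrightarrow> poly_le N (f j)) \<Longrightarrow> poly_le N (\<lambda>x. \<Sum>j\<in>F. f j x)"
  by (induction F rule: finite_induct) (auto intro: poly_le_zero poly_le_add)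

lemma poly_le_iff_finite_support:
  "poly_le N f \<longleftrightarrow>
     (\<exists>F a. finite F \<and> (\<forall>M\<in>F. int (size M) \<le> N) \<and> f = (\<lambda>x. \<Sum>M\<in>F. a M * mono M x))"
proof
  assume "poly_le N f"
  then show "\<exists>F a. finite F \<and> (\<forall>M\<in>F. int (size M) \<le> N) \<and> f = (\<lambda>x. \<Sum>M\<in>F. a M * mono M x)"
    unfolding poly_le_def using finite_multisets_size_le by blast
next
  assume "\<exists>F a. finite F \<and> (\<forall>M\<in>F. int (size M) \<le> N) \<and> f = (\<lambda>x. \<Sum>M\<in>F. a M * mono M x)"
  then obtain F a where F: "finite F" "\<forall>M\<in>F. int (size M) \<le> N"
    and f: "f = (\<lambda>x. \<Sum>M\<in>F. a M * mono M x)" by blast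
  show "poly_le N f" unfolding poly_le_def
  proof (rule exI[of _ "\<lambda>M. if M \<in> F then a M else 0"], rule ext)
    fix x
    show "f x = (\<Sum>M\<in>{M. int (size M) \<le> N}. (if M \<in> F then a M else 0) * mono M x)"
      unfolding f by (rule sum.mono_neutral_cong_left) (use F finite_multisets_size_le in auto)
  qed
qed

lemma poly_le_degree_mono: "poly_le N f \<Longrightarrow> N \<le> N' \<Longrightarrow> poly_le N' f"
  unfolding poly_le_iff_finite_support by force

lemma poly_le_monomial: "int (size M) \<le> N \<Longrightarrow> poly_le N (mono M)"
  unfolding poly_le_iff_finite_support
  by (rule exI[of _ "{M}"], rule exI[of _ "\<lambda>_. 1"]) auto

lemma mono_empty: "mono {#} = (\<lambda>_. 1)"
  unfolding mono_def by simp

lemma mono_add_mset: "mono (add_mset i M) x = x $ i * mono M x"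
proof -
  have "mono (add_mset i M) x = (\<Prod>j\<in>UNIV. (if j = i then x $ i else 1) * (x $ j) ^ count M j)"
    unfolding mono_def by (rule prod.cong) auto
  also have "\<dots> = x $ i * mono M x" unfolding mono_def prod.distrib by simp
  finally show ?thesis .
qed

lemma coord_eq_mono: "coord i = mono {#i#}"
  by (rule ext) (simp add: coord_def mono_add_mset mono_empty)

lemma poly_le_coord_mult: "poly_le N f \<Longrightarrow> poly_le (N + 1) (\<lambda>x. x $ i * f x)"
  unfolding poly_le_iff_finite_support
proof (elim exE conjE)
  fix F a assume F: "finite F" "\<forall>M\<in>F. int (size M) \<le> N"
    and f: "f = (\<lambda>x. \<Sum>M\<in>F. a M * mono M x)"
  have inj: "inj_on (add_mset i) F" by (auto simp: inj_on_def)
  show "\<exists>F a. finite F \<and> (\<forall>M\<in>F. int (size M) \<le> N + 1) \<and>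
          (\<lambda>x. x $ i * f x) = (\<lambda>x. \<Sum>M\<in>F. a M * mono M x)"
  proof (intro exI conjI)
    show "finite (add_mset i ` F)" using F by auto
    show "\<forall>M\<in>add_mset i ` F. int (size M) \<le> N + 1" using F by auto
    show "(\<lambda>x. x $ i * f x) = (\<lambda>x. \<Sum>M\<in>add_mset i ` F. a (M - {#i#}) * mono M x)"
      unfolding f sum.reindex[OF inj] by (auto simp: mono_add_mset sum_distrib_left algebra_simps)
  qed
qed

lemma poly_le_const_ser: "poly_le N f \<Longrightarrow> poly_le N (const_ser f k)"
  by (cases "k = 0") (auto simp: const_ser_def poly_le_zero)

lemma polyser_negative_degree:
  fixes s :: "nat \<Rightarrow> real^'d::finite \<Rightarrow> real"
  assumes "N < 0" and "polyser N s"
  shows "s = (\<lambda>_ _. 0)"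
proof (intro ext)
  fix k x
  have "{M::'d multiset. int (size M) \<le> N} = {}" using assms(1) by auto
  moreover obtain a where "s k = (\<lambda>x. \<Sum>M\<in>{M. int (size M) \<le> N}. a M * mono M x)"
    using assms(2) unfolding polyser_def poly_le_def by blast
  ultimately show "s k x = 0" by simp
qed

lemma polyser_scal: "polyser N a \<Longrightarrow> poly_le N (scal r a k)"
  unfolding polyser_def scal_def by (auto intro!: poly_le_sum poly_le_cmult)

lemma scal_const_ser: "scal r (const_ser f) k x = fps_nth r k * f x"
proof -
  have "scal r (const_ser f) k x = (\<Sum>i\<le>k. if i = k then fps_nth r k * f x else 0)"
    unfolding scal_def const_ser_def by (rule sum.cong) auto
  then show ?thesis by simp
qed

lemma scal_diff: "scal r (\<lambda>k x. a k x - b k x) k x = scal r a k x - scal r b k x"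
  unfolding scal_def by (simp add: right_diff_distrib sum_subtractf)

inductive_set poly_fun :: "(real^'d::finite \<Rightarrow> real) set" where
  poly_fun_const: "(\<lambda>_. c) \<in> poly_fun"
| poly_fun_coord: "(\<lambda>x. x $ i) \<in> poly_fun"
| poly_fun_add: "f \<in> poly_fun \<Longrightarrow> g \<in> poly_fun \<Longrightarrow> (\<lambda>x. f x + g x) \<in> poly_fun"
| poly_fun_mult: "f \<in> poly_fun \<Longrightarrow> g \<in> poly_fun \<Longrightarrow> (\<lambda>x. f x * g x) \<in> poly_fun"

lemma poly_fun_continuous_on: "f \<in> poly_fun \<Longrightarrow> continuous_on UNIV f"
  by (induction rule: poly_fun.induct) (auto intro!: continuous_intros)

lemma poly_fun_directional_derivative:
  "f \<in> poly_fun \<Longrightarrow>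
     \<exists>g\<in>poly_fun. \<forall>y. ((\<lambda>t. f (y + t *\<^sub>R axis i 1)) has_real_derivative g y) (at 0)"
proof (induction rule: poly_fun.induct)
  case (poly_fun_const c)
  show ?case by (intro bexI[of _ "\<lambda>_. 0"]) (auto intro: poly_fun.intros)
next
  case (poly_fun_coord j)
  show ?case
    by (rule bexI[of _ "\<lambda>_. axis i 1 $ j"]) (auto intro!: derivative_eq_intros poly_fun.intros)
next
  case (poly_fun_add f g)
  then obtain f' g' where "f' \<in> poly_fun" "g' \<in> poly_fun"
    "\<forall>y. ((\<lambda>t. f (y + t *\<^sub>R axis i 1)) has_real_derivative f' y) (at 0)"
    "\<forall>y. ((\<lambda>t. g (y + t *\<^sub>R axis i 1)) has_real_derivative g' y) (at 0)" by blast
  then show ?case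
    by (intro bexI[of _ "\<lambda>y. f' y + g' y"]) (auto intro!: derivative_eq_intros poly_fun.intros)
next
  case (poly_fun_mult f g)
  then obtain f' g' where "f' \<in> poly_fun" "g' \<in> poly_fun"
    and f': "\<forall>y. ((\<lambda>t. f (y + t *\<^sub>R axis i 1)) has_real_derivative f' y) (at 0)"
    and g': "\<forall>y. ((\<lambda>t. g (y + t *\<^sub>R axis i 1)) has_real_derivative g' y) (at 0)" by blast
  have "((\<lambda>t. f (y + t *\<^sub>R axis i 1) * g (y + t *\<^sub>R axis i 1))
          has_real_derivative f' y * g y + g' y * f y) (at 0)" for y
    using DERIV_mult[OF f'[rule_format] g'[rule_format]] by (simp add: mult.commute)
  then show ?case
    using poly_fun_mult.hyps \<open>f' \<in> poly_fun\<close> \<open>g' \<in> poly_fun\<close>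
    by (intro bexI[of _ "\<lambda>y. f' y * g y + g' y * f y"]) (auto intro!: poly_fun.intros)
qed

lemma poly_fun_partial: "f \<in> poly_fun \<Longrightarrow> partial i f \<in> poly_fun"
proof -
  assume "f \<in> poly_fun"
  then obtain g where g: "g \<in> poly_fun"
    "\<forall>y. ((\<lambda>t. f (y + t *\<^sub>R axis i 1)) has_real_derivative g y) (at 0)"
    using poly_fun_directional_derivative by blast
  have "partial i f = g" unfolding partial_def using g(2) by (auto intro!: DERIV_imp_deriv)
  with g show ?thesis by simp
qed

lemma poly_fun_dw: "f \<in> poly_fun \<Longrightarrow> dw u f \<in> poly_fun"
  by (induction u) (auto intro: poly_fun_partial)

lemma poly_fun_smooth: "f \<in> poly_fun \<Longrightarrow> smooth f"
  unfolding smooth_def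
proof (intro allI conjI)
  fix u i x assume "f \<in> poly_fun"
  then have "dw u f \<in> poly_fun" by (rule poly_fun_dw)
  then show "continuous_on UNIV (dw u f)" by (rule poly_fun_continuous_on)
  from poly_fun_directional_derivative[OF \<open>dw u f \<in> poly_fun\<close>, of i]
  show "(\<lambda>t. dw u f (x + t *\<^sub>R axis i 1)) differentiable at 0"
    using real_differentiable_def by blast
qed

lemma poly_fun_sum:
  "finite F \<Longrightarrow> (\<And>j. j \<in> F \<Longrightarrow> f j \<in> poly_fun) \<Longrightarrow> (\<lambda>x. \<Sum>j\<in>F. f j x) \<in> poly_fun"
  by (induction F rule: finite_induct) (auto intro: poly_fun.intros)

lemma poly_fun_prod:
  "finite F \<Longrightarrow> (\<And>j. j \<in> F \<Longrightarrow> f j \<in> poly_fun) \<Longrightarrow> (\<lambda>x. \<Prod>j\<in>F. f j x) \<in> poly_fun"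
  by (induction F rule: finite_induct) (auto intro: poly_fun.intros)

lemma poly_fun_power: "f \<in> poly_fun \<Longrightarrow> (\<lambda>x. f x ^ n) \<in> poly_fun"
  by (induction n) (auto intro: poly_fun.intros)

lemma poly_fun_monomial: "mono M \<in> poly_fun"
  unfolding mono_def by (intro poly_fun_prod poly_fun_power poly_fun.intros) auto

lemma poly_le_smooth: "poly_le N f \<Longrightarrow> smooth f"
  unfolding poly_le_def using finite_multisets_size_le
  by (auto intro!: poly_fun_smooth poly_fun_sum poly_fun.intros poly_fun_monomial)

lemma dw_zero: "dw u (\<lambda>_. 0) = (\<lambda>_. 0)"
  by (induction u) (auto simp: partial_def)

lemma smooth_const [simp]: "smooth (\<lambda>_. c)"
  by (rule poly_fun_smooth) (rule poly_fun_const)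

lemma bidiff_op_zero:
  assumes "bidiff_op P" and "smooth f" and "smooth g"
  shows "P (\<lambda>_. 0) g = (\<lambda>_. 0)" and "P f (\<lambda>_. 0) = (\<lambda>_. 0)"
proof -
  obtain F co where "\<forall>f g. smooth f \<longrightarrow> smooth g \<longrightarrow>
      P f g = (\<lambda>x. \<Sum>p\<in>F. co p x * dw (fst p) f x * dw (snd p) g x)"
    using assms(1) unfolding bidiff_op_def by blast
  from this[rule_format, OF smooth_const assms(3)] this[rule_format, OF assms(2) smooth_const]
  show "P (\<lambda>_. 0) g = (\<lambda>_. 0)" and "P f (\<lambda>_. 0) = (\<lambda>_. 0)"
    by (simp_all add: dw_zero)
qed

lemma star_of_const_ser_left:
  assumes "\<forall>j. bidiff_op (Pis j)" and "\<And>m. smooth (b m)"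
  shows "star_of Pis (const_ser p) b k x = (\<Sum>i\<le>k. Pis i p (b (k - i)) x)"
  unfolding star_of_def
proof (rule sum.cong[OF refl])
  fix i
  have "(\<Sum>j\<le>k - i. Pis i (const_ser p j) (b (k - i - j)) x) =
        (\<Sum>j\<le>k - i. if j = 0 then Pis i p (b (k - i)) x else 0)"
    by (rule sum.cong) (auto simp: const_ser_def bidiff_op_zero(1)[OF _ smooth_const] assms)
  then show "(\<Sum>j\<le>k - i. Pis i (const_ser p j) (b (k - i - j)) x) = Pis i p (b (k - i)) x"
    by simp
qed

lemma star_of_const_ser:
  assumes "\<forall>j. bidiff_op (Pis j)" and "smooth p" and "smooth q"
  shows "star_of Pis (const_ser p) (const_ser q) k x = Pis k p q x"
proof -
  have "smooth (const_ser q m)" for m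
    using assms(3) by (simp add: const_ser_def)
  then have "star_of Pis (const_ser p) (const_ser q) k x = (\<Sum>i\<le>k. Pis i p (const_ser q (k - i)) x)"
    by (rule star_of_const_ser_left[OF assms(1)])
  also have "\<dots> = (\<Sum>i\<le>k. if i = k then Pis k p q x else 0)"
    by (rule sum.cong) (auto simp: const_ser_def bidiff_op_zero(2)[OF _ _ smooth_const] assms)
  finally show ?thesis by simp
qed

lemma poly_le_imp_poly_deg: "poly_le (int A) p \<Longrightarrow> \<exists>d\<le>A. poly_deg d p"
proof -
  assume p: "poly_le (int A) p"
  define d where "d = (LEAST k. poly_le (int k) p)"
  have "poly_le (int d) p" unfolding d_def by (rule LeastI[of _ A]) (rule p)
  moreover have "d \<le> A" unfolding d_def by (rule Least_le) (rule p)
  moreover have "\<forall>k<d. \<not> poly_le (int k) p" unfolding d_def using not_less_Least by blast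
  ultimately show ?thesis unfolding poly_deg_def by blast
qed

lemma P1_poly_le_higher_order:
  assumes "\<forall>j. bidiff_op (Pis j)" and "P1 Pis"
    and p: "poly_le (int A) p" and q: "poly_le (int B) q" and "0 < k"
  shows "poly_le (int A + int B - 1) (Pis k p q)"
proof -
  obtain dp dq where dp: "dp \<le> A" "poly_deg dp p" and dq: "dq \<le> B" "poly_deg dq q"
    using poly_le_imp_poly_deg[OF p] poly_le_imp_poly_deg[OF q] by blast
  then obtain r where
    r: "\<forall>k x. star_of Pis (const_ser p) (const_ser q) k x = const_ser (\<lambda>x. p x * q x) k x + r k x"
    and r_deg: "polyser (int dp + int dq - 1) r"
    using \<open>P1 Pis\<close> unfolding P1_def by blast
  have "Pis k p q = r k"
  proof
    fix x
    show "Pis k p q x = r k x"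
      using r[rule_format, of k x] \<open>0 < k\<close>
        star_of_const_ser[OF assms(1) poly_le_smooth[OF p] poly_le_smooth[OF q]]
      by (simp add: const_ser_def)
  qed
  with r_deg have "poly_le (int dp + int dq - 1) (Pis k p q)" by (simp add: polyser_def)
  then show ?thesis by (rule poly_le_degree_mono) (use dp dq in simp)
qed

definition leading_monomial :: "'d::finite multiset \<Rightarrow> (nat \<Rightarrow> real^'d \<Rightarrow> real) \<Rightarrow> bool" where
  "leading_monomial M b \<longleftrightarrow> polyser (int (size M) - 1) (\<lambda>k x. b k x - const_ser (mono M) k x)"

lemma leading_monomial_imp_polyser:
  assumes "leading_monomial M b" and "int (size M) \<le> N"
  shows "polyser N b"
  unfolding polyser_def
proof
  fix k
  have "poly_le N (const_ser (mono M) k)"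
    using assms(2) by (intro poly_le_const_ser poly_le_monomial)
  moreover have "poly_le (int (size M) - 1) (\<lambda>x. b k x - const_ser (mono M) k x)"
    using assms(1) unfolding leading_monomial_def polyser_def by blast
  then have "poly_le N (\<lambda>x. b k x - const_ser (mono M) k x)"
    by (rule poly_le_degree_mono) (use assms(2) in simp)
  ultimately have "poly_le N (\<lambda>x. const_ser (mono M) k x + (b k x - const_ser (mono M) k x))"
    by (rule poly_le_add)
  then show "poly_le N (b k)" by simp
qed

lemma starw_leading_monomial:
  assumes star: "is_star_product c Pis" and "P1 Pis"
  shows "leading_monomial (mset u) (starw Pis u)"
proof (induction u rule: induct_list012)
  case 1
  show ?case by (simp add: leading_monomial_def polyser_def const_ser_def mono_empty poly_le_zero)
next
  case (2 i)
  show ?case by (simp add: leading_monomial_def polyser_def coord_eq_mono poly_le_zero)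
next
  case (3 i j w)
  define u where "u = j # w"
  define b where "b = starw Pis u"
  define r where "r = (\<lambda>k x. b k x - const_ser (mono (mset u)) k x)"
  let ?L = "int (length u)"
  from "3.IH"(2) have r_deg: "poly_le (?L - 1) (r k)" for k
    by (simp add: leading_monomial_def polyser_def r_def b_def u_def)
  from "3.IH"(2) have b_deg: "poly_le ?L (b k)" for k
    using leading_monomial_imp_polyser by (fastforce simp: polyser_def b_def u_def)
  have bidiff: "\<forall>j. bidiff_op (Pis j)" using star by (simp add: is_star_product_def)
  have coord_deg: "poly_le (int 1) (coord i)" unfolding coord_eq_mono by (rule poly_le_monomial) simp
  have "starw Pis (i # u) k x - const_ser (mono (mset (i # u))) k x =
        x $ i * r k x + (\<Sum>l\<in>{1..k}. Pis l (coord i) (b (k - l)) x)" for k x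
  proof -
    have "starw Pis (i # u) k x = (\<Sum>l\<le>k. Pis l (coord i) (b (k - l)) x)"
      using star_of_const_ser_left[OF bidiff poly_le_smooth[OF b_deg]] by (simp add: u_def b_def)
    also have "\<dots> = Pis 0 (coord i) (b k) x + (\<Sum>l\<in>{1..k}. Pis l (coord i) (b (k - l)) x)"
      by (simp add: atMost_atLeast0 sum.atLeast_Suc_atMost)
    also have "Pis 0 (coord i) (b k) x = x $ i * b k x"
      using star poly_le_smooth[OF coord_deg] poly_le_smooth[OF b_deg]
      by (simp add: is_star_product_def coord_def)
    finally show ?thesis
      by (simp add: r_def const_ser_def mono_add_mset algebra_simps)
  qed
  moreover have "poly_le ?L (\<lambda>x. x $ i * r k x + (\<Sum>l\<in>{1..k}. Pis l (coord i) (b (k - l)) x))" for k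
    using poly_le_coord_mult[OF r_deg]
      P1_poly_le_higher_order[OF bidiff \<open>P1 Pis\<close> coord_deg b_deg]
    by (intro poly_le_add poly_le_sum) auto
  ultimately show ?case by (simp add: leading_monomial_def polyser_def u_def)
qed

lemma polyser_reduce_top_degree:
  fixes b :: "'d::finite multiset \<Rightarrow> nat \<Rightarrow> real^'d \<Rightarrow> real"
  assumes lead: "\<And>M. leading_monomial M (b M)" and s: "polyser (N + 1) s"
  shows "\<exists>co. polyser N (\<lambda>k x. s k x - (\<Sum>M\<in>{M. int (size M) = N + 1}. scal (co M) (b M) k x))"
proof -
  define S where "S = {M::'d multiset. int (size M) \<le> N}"
  define T where "T = {M::'d multiset. int (size M) = N + 1}"
  have fin: "finite S" "finite T"
    unfolding S_def T_def by (simp_all add: finite_multisets_size_le finite_multisets_size_eq)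
  obtain a where "\<And>k. s k = (\<lambda>x. \<Sum>M\<in>{M. int (size M) \<le> N + 1}. a k M * mono M x)"
    using s unfolding polyser_def poly_le_def by metis
  then have s_split: "s k x = (\<Sum>M\<in>S. a k M * mono M x) + (\<Sum>M\<in>T. a k M * mono M x)" for k x
    by (simp add: sum_multisets_size_le_plus1 S_def T_def)
  define R where "R = (\<lambda>M k x. b M k x - const_ser (mono M) k x)"
  define co where "co = (\<lambda>M. Abs_fps (\<lambda>k. a k M))"
  have "scal (co M) (b M) k x = a k M * mono M x + scal (co M) (R M) k x" for M k x
    by (simp add: R_def scal_diff scal_const_ser co_def)
  then have "s k x - (\<Sum>M\<in>T. scal (co M) (b M) k x) =
             (\<Sum>M\<in>S. a k M * mono M x) - (\<Sum>M\<in>T. scal (co M) (R M) k x)" for k x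
    by (simp add: s_split sum.distrib)
  moreover have "polyser N (R M)" if "M \<in> T" for M
    using lead[of M] that by (simp add: leading_monomial_def R_def T_def)
  then have "poly_le N (\<lambda>x. (\<Sum>M\<in>S. a k M * mono M x) - (\<Sum>M\<in>T. scal (co M) (R M) k x))" for k
    using fin by (intro poly_le_diff poly_le_sum poly_le_cmult poly_le_monomial polyser_scal)
      (auto simp: S_def T_def)
  ultimately show ?thesis unfolding polyser_def T_def by (intro exI[of _ co] allI) simp
qed

lemma polyser_span_negative_degree:
  fixes b :: "'d::finite multiset \<Rightarrow> nat \<Rightarrow> real^'d \<Rightarrow> real"
  assumes "N < 0" and "polyser N s"
  shows "s = (\<lambda>k x. \<Sum>M\<in>{M. int (size M) \<le> N}. scal (co M) (b M) k x)"
proof -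
  have "{M::'d multiset. int (size M) \<le> N} = {}" using assms(1) by auto
  then show ?thesis using polyser_negative_degree[OF assms] by simp
qed

lemma polyser_span_leading_monomial:
  fixes b :: "'d::finite multiset \<Rightarrow> nat \<Rightarrow> real^'d \<Rightarrow> real"
  assumes lead: "\<And>M. leading_monomial M (b M)" and "polyser N s"
  shows "\<exists>co. s = (\<lambda>k x. \<Sum>M\<in>{M. int (size M) \<le> N}. scal (co M) (b M) k x)"
  using \<open>polyser N s\<close>
proof (induction N arbitrary: s rule: int_induct[where k = "-1"])
  case base
  then show ?case by (intro exI polyser_span_negative_degree) simp_all
next
  case (step2 N)
  then show ?case by (intro exI polyser_span_negative_degree) simp_all
next
  case (step1 N)
  let ?T = "{M::'d multiset. int (size M) = N + 1}"
  obtain cot where "polyser N (\<lambda>k x. s k x - (\<Sum>M\<in>?T. scal (cot M) (b M) k x))"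
    using polyser_reduce_top_degree[OF lead step1.prems] by blast
  then obtain co' where co': "(\<lambda>k x. s k x - (\<Sum>M\<in>?T. scal (cot M) (b M) k x)) =
      (\<lambda>k x. \<Sum>M\<in>{M. int (size M) \<le> N}. scal (co' M) (b M) k x)"
    using step1.IH by blast
  define co where "co = (\<lambda>M. if M \<in> ?T then cot M else co' M)"
  have "s k x = (\<Sum>M\<in>{M. int (size M) \<le> N + 1}. scal (co M) (b M) k x)" for k x
    using fun_cong[OF fun_cong[OF co', of k], of x]
    by (simp add: sum_multisets_size_le_plus1 co_def)
  then show ?case by blast
qed

theorem lemma2p1p1:
  fixes c :: "'d::finite \<Rightarrow> 'd \<Rightarrow> 'd \<Rightarrow> real"
    and Pis :: "nat \<Rightarrow> (real^'d \<Rightarrow> real) \<Rightarrow> (real^'d \<Rightarrow> real) \<Rightarrow> real^'d \<Rightarrow> real"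
    and w :: "'d multiset \<Rightarrow> 'd list"
    and n :: nat
  assumes "lie_structure c"
    and "is_star_product c Pis"
    and "P1 Pis"
    and "\<forall>M. mset (w M) = M"
  shows "(\<forall>M. size M \<le> n \<longrightarrow> polyser (int n) (starw Pis (w M))) \<and>
         (\<forall>s. polyser (int n) s \<longrightarrow>
            (\<exists>co :: 'd multiset \<Rightarrow> real fps.
               s = (\<lambda>k x. \<Sum>M\<in>{M. size M \<le> n}. scal (co M) (starw Pis (w M)) k x)))"
proof -
  have lead: "leading_monomial M (starw Pis (w M))" for M
    using starw_leading_monomial[OF assms(2,3), of "w M"] assms(4) by simp
  show ?thesis
  proof (intro conjI allI impI)
    fix M :: "'d multiset"
    assume "size M \<le> n"
    then show "polyser (int n) (starw Pis (w M))"
      by (intro leading_monomial_imp_polyser[OF lead]) simp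
  next
    fix s :: "nat \<Rightarrow> real^'d \<Rightarrow> real"
    assume "polyser (int n) s"
    then show "\<exists>co :: 'd multiset \<Rightarrow> real fps.
        s = (\<lambda>k x. \<Sum>M\<in>{M. size M \<le> n}. scal (co M) (starw Pis (w M)) k x)"
      using polyser_span_leading_monomial[OF lead, of "int n" s] by simp
  qed
qed

end
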